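(* Let $n\in\mathbb{N}$ and $\xi_1,\dots,\xi_n\ge0$ with $\xi_1+\dots+\xi_n=1$. For $j\in[n]$ define $\phi_j:\mathbb{R}^n\to\mathbb{R}$ by $\phi_j(z)=\frac{\xi_j\exp(z_j)}{\sum_{k=1}^n\xi_k\exp(z_k)}$, and let $\sum_{\gamma\in\mathbb{Z}_{\ge0}^n}a_{j,\gamma}z^\gamma$ be its Taylor series at $0$. Then for every $j\in[n]$ and every integer $k\ge1$, $$\sum_{\gamma\in\mathbb{Z}_{\ge0}^n:\,|\gamma|=k}|a_{j,\gamma}|\le\xi_je^{k+1}.$$
   Context: $z^\gamma=z_1^{\gamma_1}\cdots z_n^{\gamma_n}$ and $|\gamma|=\gamma_1+\dots+\gamma_n$. *)

theory Defs
  imports "HOL-Analysis.Analysis"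
begin

text \<open>Points of R^n are represented as functions z :: nat => real, coordinates z 0, ..., z (n-1)
  (index j in [n] corresponds to j-1). Multi-indices gamma :: nat => nat are supported in {0..<n}.\<close>

definition phi :: "nat \<Rightarrow> (nat \<Rightarrow> real) \<Rightarrow> nat \<Rightarrow> (nat \<Rightarrow> real) \<Rightarrow> real" where
  "phi n \<xi> j z = \<xi> j * exp (z j) / (\<Sum>k<n. \<xi> k * exp (z k))"

definition partial_deriv :: "nat \<Rightarrow> ((nat \<Rightarrow> real) \<Rightarrow> real) \<Rightarrow> (nat \<Rightarrow> real) \<Rightarrow> real" where
  "partial_deriv i f z = deriv (\<lambda>t. f (z(i := z i + t))) 0"

fun iter_partials :: "nat list \<Rightarrow> ((nat \<Rightarrow> real) \<Rightarrow> real) \<Rightarrow> (nat \<Rightarrow> real) \<Rightarrow> real" where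
  "iter_partials [] f = f"
| "iter_partials (i # is) f = partial_deriv i (iter_partials is f)"

definition multi_deriv :: "nat \<Rightarrow> (nat \<Rightarrow> nat) \<Rightarrow> ((nat \<Rightarrow> real) \<Rightarrow> real) \<Rightarrow> (nat \<Rightarrow> real) \<Rightarrow> real" where
  "multi_deriv n \<gamma> f = iter_partials (concat (map (\<lambda>i. replicate (\<gamma> i) i) [0..<n])) f"

definition taylor_coeff :: "nat \<Rightarrow> ((nat \<Rightarrow> real) \<Rightarrow> real) \<Rightarrow> (nat \<Rightarrow> nat) \<Rightarrow> real" where
  "taylor_coeff n f \<gamma> = multi_deriv n \<gamma> f (\<lambda>_. 0) / (\<Prod>i<n. fact (\<gamma> i))"

definition multi_indices :: "nat \<Rightarrow> nat \<Rightarrow> (nat \<Rightarrow> nat) set" where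
  "multi_indices n k = {\<gamma>. (\<forall>i\<ge>n. \<gamma> i = 0) \<and> (\<Sum>i<n. \<gamma> i) = k}"

end

theory Submission
  imports Defs "HOL-Combinatorics.Multiset_Permutations"
begin

text \<open>Every partial derivative of a softmax component is a polynomial in the components,
  since \<open>\<partial>\<^sub>i \<phi>\<^sub>m = \<phi>\<^sub>m (\<delta>\<^sub>m\<^sub>i - \<phi>\<^sub>i)\<close>. Differentiating a monomial
  \<open>c \<phi>\<^sub>m\<^sub>1 \<cdots> \<phi>\<^sub>m\<^sub>d\<close> in all directions \<open>i < n\<close> and measuring terms by
  \<open>|c| \<xi>\<^sub>m\<^sub>1 \<cdots> \<xi>\<^sub>m\<^sub>d\<close> (their value at \<open>0\<close>, where \<open>\<phi>\<^sub>m = \<xi>\<^sub>m\<close>) multiplies the total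
  weight by at most \<open>2d\<close>, because \<open>\<Sum>\<^sub>i \<xi>\<^sub>i = 1\<close>. Hence the \<open>k\<close>-fold derivatives of \<open>\<phi>\<^sub>j\<close> along all
  index sequences of length \<open>k\<close> have total absolute value at most \<open>2\<^sup>k k! \<xi>\<^sub>j\<close> at \<open>0\<close>.
  By symmetry of mixed partials each multi-index \<open>\<gamma>\<close> with \<open>|\<gamma>| = k\<close> is hit by exactly
  \<open>k!/\<gamma>!\<close> sequences, so \<open>\<Sum>\<^sub>\<gamma> |a\<^sub>\<gamma>| \<le> 2\<^sup>k \<xi>\<^sub>j \<le> e\<^sup>k\<^sup>+\<^sup>1 \<xi>\<^sub>j\<close>.\<close>

lemma iter_partials_insort:
  assumes swap: "\<And>a b s. a \<in> A \<Longrightarrow> b \<in> A \<Longrightarrow> set s \<subseteq> A \<Longrightarrow>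
      iter_partials (a # b # s) f = iter_partials (b # a # s) f"
    and "a \<in> A" "set s \<subseteq> A"
  shows "iter_partials (insort a s) f = iter_partials (a # s) f"
  using assms(2,3)
proof (induction s)
  case (Cons b s)
  show ?case
  proof (cases "a \<le> b")
    case False
    then have "iter_partials (insort a (b # s)) f = partial_deriv b (iter_partials (a # s) f)"
      using Cons by simp
    also have "\<dots> = iter_partials (a # b # s) f"
      using swap[of b a s] Cons.prems by simp
    finally show ?thesis .
  qed simp
qed simp

lemma iter_partials_sort:
  assumes "\<And>a b s. a \<in> A \<Longrightarrow> b \<in> A \<Longrightarrow> set s \<subseteq> A \<Longrightarrow>
      iter_partials (a # b # s) f = iter_partials (b # a # s) f"
    and "set s \<subseteq> A"
  shows "iter_partials (sort s) f = iter_partials s f"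
  using assms(2)
proof (induction s)
  case (Cons a s)
  then have "iter_partials (sort (a # s)) f = iter_partials (a # sort s) f"
    using iter_partials_insort[OF assms(1)] by simp
  also have "\<dots> = iter_partials (a # s) f"
    using Cons by simp
  finally show ?case .
qed simp

definition index_lists :: "nat \<Rightarrow> nat \<Rightarrow> nat list set" where
  "index_lists n k = {s. set s \<subseteq> {..<n} \<and> length s = k}"

lemma finite_index_lists: "finite (index_lists n k)"
  unfolding index_lists_def by (rule finite_lists_length_eq) simp

lemma index_lists_Suc:
  "index_lists n (Suc k) = (\<lambda>(s, i). i # s) ` (index_lists n k \<times> {..<n})"
  unfolding index_lists_def by (rule lists_length_Suc_eq)

definition list_of_multi_index :: "nat \<Rightarrow> (nat \<Rightarrow> nat) \<Rightarrow> nat list" where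
  "list_of_multi_index n \<gamma> = concat (map (\<lambda>i. replicate (\<gamma> i) i) [0..<n])"

lemma list_of_multi_index_Suc:
  "list_of_multi_index (Suc n) \<gamma> = list_of_multi_index n \<gamma> @ replicate (\<gamma> n) n"
  by (simp add: list_of_multi_index_def)

lemma set_list_of_multi_index: "set (list_of_multi_index n \<gamma>) \<subseteq> {..<n}"
  by (auto simp: list_of_multi_index_def)

lemma sorted_list_of_multi_index: "sorted (list_of_multi_index n \<gamma>)"
proof (induction n)
  case (Suc n)
  then show ?case
    using set_list_of_multi_index[of n \<gamma>] by (auto simp: list_of_multi_index_Suc sorted_append)
qed (simp add: list_of_multi_index_def)

lemma count_list_replicate: "count_list (replicate m i) x = (if i = x then m else 0)"
  by (induction m) auto

lemma count_list_eq_0_if_bounded: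
  fixes s :: "nat list"
  assumes "set s \<subseteq> {..<n}" "n \<le> i"
  shows "count_list s i = 0"
proof -
  have "i \<notin> set s"
    using assms by auto
  then show ?thesis
    by simp
qed

lemma count_list_of_multi_index:
  "count_list (list_of_multi_index n \<gamma>) x = (if x < n then \<gamma> x else 0)"
  by (induction n) (auto simp: list_of_multi_index_Suc count_list_replicate list_of_multi_index_def)

lemma length_list_of_multi_index: "length (list_of_multi_index n \<gamma>) = (\<Sum>i<n. \<gamma> i)"
  by (induction n) (auto simp: list_of_multi_index_Suc list_of_multi_index_def)

lemma list_of_multi_index_count_list:
  assumes "set s \<subseteq> {..<n}"
  shows "list_of_multi_index n (count_list s) = sort s"
proof (rule properties_for_sort[symmetric])
  show "mset (list_of_multi_index n (count_list s)) = mset s"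
    using assms by (auto simp: multiset_eq_iff count_mset count_list_of_multi_index
        count_list_eq_0_if_bounded)
qed (rule sorted_list_of_multi_index)

lemma count_list_of_multi_index_eq:
  "\<gamma> \<in> multi_indices n k \<Longrightarrow> count_list (list_of_multi_index n \<gamma>) = \<gamma>"
  by (auto simp: fun_eq_iff count_list_of_multi_index multi_indices_def)

lemma multi_indices_eq_image: "multi_indices n k = count_list ` index_lists n k"
proof
  show "count_list ` index_lists n k \<subseteq> multi_indices n k"
    by (auto simp: index_lists_def multi_indices_def sum_count_set count_list_eq_0_if_bounded)
  show "multi_indices n k \<subseteq> count_list ` index_lists n k"
  proof
    fix \<gamma> assume \<gamma>: "\<gamma> \<in> multi_indices n k"
    then have "list_of_multi_index n \<gamma> \<in> index_lists n k"
      using set_list_of_multi_index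
      by (auto simp: index_lists_def length_list_of_multi_index multi_indices_def)
    then show "\<gamma> \<in> count_list ` index_lists n k"
      using count_list_of_multi_index_eq[OF \<gamma>] by force
  qed
qed

lemma index_lists_with_counts:
  assumes "\<gamma> \<in> multi_indices n k"
  shows "{s \<in> index_lists n k. count_list s = \<gamma>}
           = permutations_of_multiset (mset (list_of_multi_index n \<gamma>))"
proof -
  have counts: "count_list (list_of_multi_index n \<gamma>) = \<gamma>"
    using assms by (rule count_list_of_multi_index_eq)
  have "s \<in> index_lists n k \<and> count_list s = \<gamma> \<longleftrightarrow> mset s = mset (list_of_multi_index n \<gamma>)" for s
  proof
    assume mset_s: "mset s = mset (list_of_multi_index n \<gamma>)"
    then have "set s = set (list_of_multi_index n \<gamma>)"
      by (metis set_mset_mset)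
    moreover have "length s = k"
      using mset_eq_length[OF mset_s] assms
      by (simp add: length_list_of_multi_index multi_indices_def)
    moreover have "count_list s = \<gamma>"
      using mset_s counts by (metis count_mset ext)
    ultimately show "s \<in> index_lists n k \<and> count_list s = \<gamma>"
      using set_list_of_multi_index by (auto simp: index_lists_def)
  qed (use counts in \<open>auto simp: multiset_eq_iff count_mset\<close>)
  then show ?thesis
    by (auto simp: permutations_of_multiset_def)
qed

lemma card_index_lists_with_counts:
  assumes "\<gamma> \<in> multi_indices n k"
  shows "card {s \<in> index_lists n k. count_list s = \<gamma>} * (\<Prod>i<n. fact (\<gamma> i)) = fact k"
proof -
  define A where "A = mset (list_of_multi_index n \<gamma>)"
  have count_A: "count A i = (if i < n then \<gamma> i else 0)" for i
    by (simp add: A_def count_mset count_list_of_multi_index)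
  have "(\<Prod>i\<in>set_mset A. fact (count A i) :: nat) = (\<Prod>i<n. fact (count A i))"
    using set_list_of_multi_index
    by (intro prod.mono_neutral_left) (auto simp: A_def count_mset)
  also have "\<dots> = (\<Prod>i<n. fact (\<gamma> i))"
    by (simp add: count_A)
  finally have "card (permutations_of_multiset A) * (\<Prod>i<n. fact (\<gamma> i)) = fact (size A)"
    using card_permutations_of_multiset_aux[of A] by simp
  moreover have "size A = k"
    using assms by (simp add: A_def length_list_of_multi_index multi_indices_def)
  ultimately show ?thesis
    using index_lists_with_counts[OF assms] by (simp add: A_def)
qed

lemma sum_index_lists_multinomial:
  fixes g :: "nat list \<Rightarrow> 'a :: field_char_0"
  assumes "\<And>s. s \<in> index_lists n k \<Longrightarrow> g (sort s) = g s"
  shows "(\<Sum>s\<in>index_lists n k. g s)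
           = (\<Sum>\<gamma>\<in>multi_indices n k. fact k / (\<Prod>i<n. fact (\<gamma> i)) * g (list_of_multi_index n \<gamma>))"
proof -
  define fiber where "fiber \<gamma> = {s \<in> index_lists n k. count_list s = \<gamma>}" for \<gamma>
  have "(\<Sum>s\<in>index_lists n k. g s) = (\<Sum>\<gamma>\<in>multi_indices n k. \<Sum>s\<in>fiber \<gamma>. g s)"
    unfolding multi_indices_eq_image fiber_def
    by (rule sum.image_gen) (rule finite_index_lists)
  also have "\<dots> = (\<Sum>\<gamma>\<in>multi_indices n k. of_nat (card (fiber \<gamma>)) * g (list_of_multi_index n \<gamma>))"
  proof (intro sum.cong refl)
    fix \<gamma> assume "\<gamma> \<in> multi_indices n k"
    have "g s = g (list_of_multi_index n \<gamma>)" if "s \<in> fiber \<gamma>" for s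
      using that assms list_of_multi_index_count_list[of s n]
      by (auto simp: fiber_def index_lists_def)
    then show "(\<Sum>s\<in>fiber \<gamma>. g s) = of_nat (card (fiber \<gamma>)) * g (list_of_multi_index n \<gamma>)"
      by simp
  qed
  also have "\<dots> = (\<Sum>\<gamma>\<in>multi_indices n k. fact k / (\<Prod>i<n. fact (\<gamma> i)) * g (list_of_multi_index n \<gamma>))"
  proof (intro sum.cong refl)
    fix \<gamma> assume "\<gamma> \<in> multi_indices n k"
    then have "of_nat (card (fiber \<gamma>) * (\<Prod>i<n. fact (\<gamma> i))) = (of_nat (fact k) :: 'a)"
      unfolding fiber_def by (subst card_index_lists_with_counts) simp_all
    then have "of_nat (card (fiber \<gamma>)) * (\<Prod>i<n. fact (\<gamma> i)) = (fact k :: 'a)"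
      by (simp add: of_nat_prod)
    moreover have "(\<Prod>i<n. fact (\<gamma> i) :: 'a) \<noteq> 0"
      by simp
    ultimately show "of_nat (card (fiber \<gamma>)) * g (list_of_multi_index n \<gamma>)
        = fact k / (\<Prod>i<n. fact (\<gamma> i)) * g (list_of_multi_index n \<gamma>)"
      by (simp add: field_simps)
  qed
  finally show ?thesis .
qed

locale prob_vector =
  fixes n :: nat and \<xi> :: "nat \<Rightarrow> real"
  assumes nonneg: "\<And>i. i < n \<Longrightarrow> 0 \<le> \<xi> i"
    and sum_eq_1: "(\<Sum>i<n. \<xi> i) = 1"
begin

lemma softmax_denominator_pos: "0 < (\<Sum>k<n. \<xi> k * exp (z k))"
proof -
  have "\<exists>k<n. 0 < \<xi> k"
  proof (rule ccontr)
    assume "\<not> (\<exists>k<n. 0 < \<xi> k)"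
    then have "(\<Sum>i<n. \<xi> i) \<le> 0"
      by (intro sum_nonpos) (meson lessThan_iff not_less)
    with sum_eq_1 show False
      by simp
  qed
  then obtain k where k: "k < n" "0 < \<xi> k"
    by blast
  then have "0 < \<xi> k * exp (z k)"
    by simp
  also have "\<dots> \<le> (\<Sum>k<n. \<xi> k * exp (z k))"
    using k by (intro member_le_sum) (auto simp: nonneg)
  finally show ?thesis .
qed

lemma phi_has_partial_derivative:
  assumes "i < n"
  shows "((\<lambda>t. phi n \<xi> m (z(i := z i + t))) has_real_derivative
           phi n \<xi> m z * (of_bool (m = i) - phi n \<xi> i z)) (at 0)"
proof -
  define S where "S = (\<Sum>k<n. \<xi> k * exp (z k))"
  have "S > 0"
    unfolding S_def by (rule softmax_denominator_pos)
  have denominator: "(\<Sum>k<n. \<xi> k * exp ((z(i := z i + t)) k)) = S + \<xi> i * exp (z i) * (exp t - 1)" for t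
  proof -
    have "(\<Sum>k<n. \<xi> k * exp ((z(i := z i + t)) k))
        = (\<Sum>k<n. \<xi> k * exp (z k) + (if k = i then \<xi> i * exp (z i) * (exp t - 1) else 0))"
      by (intro sum.cong) (auto simp: exp_add algebra_simps)
    also have "\<dots> = S + \<xi> i * exp (z i) * (exp t - 1)"
      using assms by (simp add: sum.distrib S_def)
    finally show ?thesis .
  qed
  have "phi n \<xi> m (z(i := z i + t)) = \<xi> m * exp (z m + of_bool (m = i) * t) / (S + \<xi> i * exp (z i) * (exp t - 1))" for t
    unfolding phi_def denominator by simp
  moreover have "((\<lambda>t. \<xi> m * exp (z m + of_bool (m = i) * t) / (S + \<xi> i * exp (z i) * (exp t - 1)))
      has_real_derivative phi n \<xi> m z * (of_bool (m = i) - phi n \<xi> i z)) (at 0)"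
    using \<open>S > 0\<close>
    by (auto intro!: derivative_eq_intros simp: phi_def S_def[symmetric] field_simps power2_eq_square)
  ultimately show ?thesis
    by simp
qed

text \<open>A pair \<open>(c, ms)\<close> stands for the monomial \<open>c \<Prod>\<^bsub>m \<in> ms\<^esub> \<phi>\<^sub>m\<close> in the softmax components,
  a list of pairs for the sum of its monomials.\<close>

type_synonym phi_poly = "(real \<times> nat list) list"

definition phi_monomial :: "nat list \<Rightarrow> (nat \<Rightarrow> real) \<Rightarrow> real" where
  "phi_monomial ms z = (\<Prod>m\<leftarrow>ms. phi n \<xi> m z)"

definition eval_poly :: "phi_poly \<Rightarrow> (nat \<Rightarrow> real) \<Rightarrow> real" where
  "eval_poly p z = (\<Sum>(c, ms)\<leftarrow>p. c * phi_monomial ms z)"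

definition partial_monomial :: "nat \<Rightarrow> real \<times> nat list \<Rightarrow> phi_poly" where
  "partial_monomial i t = (case t of (c, ms) \<Rightarrow>
     [(c * of_nat (count_list ms i), ms), (- c * of_nat (length ms), i # ms)])"

definition partial_poly :: "nat \<Rightarrow> phi_poly \<Rightarrow> phi_poly" where
  "partial_poly i p = concat (map (partial_monomial i) p)"

definition weight :: "phi_poly \<Rightarrow> real" where
  "weight p = (\<Sum>(c, ms)\<leftarrow>p. \<bar>c\<bar> * (\<Prod>m\<leftarrow>ms. \<xi> m))"

definition well_indexed :: "phi_poly \<Rightarrow> bool" where
  "well_indexed p \<longleftrightarrow> (\<forall>(c, ms)\<in>set p. set ms \<subseteq> {..<n})"

definition degree_le :: "nat \<Rightarrow> phi_poly \<Rightarrow> bool" where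
  "degree_le d p \<longleftrightarrow> (\<forall>(c, ms)\<in>set p. length ms \<le> d)"

lemma phi_monomial_simps [simp]:
  "phi_monomial [] z = 1"
  "phi_monomial (m # ms) z = phi n \<xi> m z * phi_monomial ms z"
  by (simp_all add: phi_monomial_def)

lemma eval_poly_simps [simp]:
  "eval_poly [] z = 0"
  "eval_poly ((c, ms) # p) z = c * phi_monomial ms z + eval_poly p z"
  "eval_poly (p @ q) z = eval_poly p z + eval_poly q z"
  by (simp_all add: eval_poly_def)

lemma partial_poly_simps [simp]:
  "partial_poly i [] = []"
  "partial_poly i (t # p) = partial_monomial i t @ partial_poly i p"
  by (simp_all add: partial_poly_def)

lemma weight_simps [simp]:
  "weight [] = 0"
  "weight ((c, ms) # p) = \<bar>c\<bar> * (\<Prod>m\<leftarrow>ms. \<xi> m) + weight p"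
  "weight (p @ q) = weight p + weight q"
  by (simp_all add: weight_def)

lemma phi_monomial_has_partial_derivative:
  assumes "i < n"
  shows "((\<lambda>t. phi_monomial ms (z(i := z i + t))) has_real_derivative
           phi_monomial ms z * (of_nat (count_list ms i) - of_nat (length ms) * phi n \<xi> i z)) (at 0)"
proof (induction ms)
  case (Cons m ms)
  show ?case
    unfolding phi_monomial_simps
    by (rule DERIV_cong[OF DERIV_mult[OF phi_has_partial_derivative[OF assms] Cons.IH]])
      (simp add: algebra_simps)
qed simp

lemma eval_poly_has_partial_derivative:
  assumes "i < n"
  shows "((\<lambda>t. eval_poly p (z(i := z i + t))) has_real_derivative eval_poly (partial_poly i p) z) (at 0)"
proof (induction p)
  case (Cons t p)
  obtain c ms where t: "t = (c, ms)"
    by force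
  show ?case
    unfolding t eval_poly_simps partial_poly_simps
    by (rule DERIV_cong[OF DERIV_add[OF DERIV_cmult[OF phi_monomial_has_partial_derivative[OF assms]] Cons.IH]])
      (simp add: partial_monomial_def algebra_simps)
qed simp

lemma partial_deriv_eval_poly: "i < n \<Longrightarrow> partial_deriv i (eval_poly p) = eval_poly (partial_poly i p)"
  unfolding partial_deriv_def fun_eq_iff
  using eval_poly_has_partial_derivative DERIV_imp_deriv by blast

lemma iter_partials_eval_poly:
  "set s \<subseteq> {..<n} \<Longrightarrow> iter_partials s (eval_poly p) = eval_poly (foldr partial_poly s p)"
  by (induction s) (auto simp: partial_deriv_eval_poly)

text \<open>Symmetry of mixed partials holds already on the formal representations, so no
  smoothness argument (Schwarz's theorem) is needed.\<close>

lemma eval_partial_poly_commute: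
  "eval_poly (partial_poly a (partial_poly b p)) = eval_poly (partial_poly b (partial_poly a p))"
proof (rule ext, induction p)
  case (Cons t p)
  then show ?case
    by (cases t) (simp add: partial_monomial_def algebra_simps)
qed simp

lemma iter_partials_eval_poly_sort:
  assumes "set s \<subseteq> {..<n}"
  shows "iter_partials (sort s) (eval_poly p) = iter_partials s (eval_poly p)"
  using assms
proof (rule iter_partials_sort[rotated])
  fix a b s assume "a \<in> {..<n}" "b \<in> {..<n}" "set s \<subseteq> {..<n}"
  then have "set (a # b # s) \<subseteq> {..<n}" "set (b # a # s) \<subseteq> {..<n}"
    by auto
  then show "iter_partials (a # b # s) (eval_poly p) = iter_partials (b # a # s) (eval_poly p)"
    by (simp only: iter_partials_eval_poly foldr_Cons comp_apply eval_partial_poly_commute)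
qed

lemma well_indexed_partial_poly: "well_indexed p \<Longrightarrow> i < n \<Longrightarrow> well_indexed (partial_poly i p)"
  by (fastforce simp: well_indexed_def partial_poly_def partial_monomial_def)

lemma well_indexed_partials:
  "well_indexed p \<Longrightarrow> set s \<subseteq> {..<n} \<Longrightarrow> well_indexed (foldr partial_poly s p)"
  by (induction s) (auto simp: well_indexed_partial_poly)

lemma degree_le_partial_poly: "degree_le d p \<Longrightarrow> degree_le (Suc d) (partial_poly i p)"
  by (fastforce simp: degree_le_def partial_poly_def partial_monomial_def)

lemma degree_le_partials: "degree_le d p \<Longrightarrow> degree_le (d + length s) (foldr partial_poly s p)"
  by (induction s) (auto simp: degree_le_partial_poly)

lemma phi_at_zero: "m < n \<Longrightarrow> phi n \<xi> m (\<lambda>_. 0) = \<xi> m"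
  by (simp add: phi_def sum_eq_1)

lemma phi_monomial_at_zero: "set ms \<subseteq> {..<n} \<Longrightarrow> phi_monomial ms (\<lambda>_. 0) = (\<Prod>m\<leftarrow>ms. \<xi> m)"
  by (induction ms) (auto simp: phi_at_zero)

lemma prod_weights_nonneg: "set ms \<subseteq> {..<n} \<Longrightarrow> 0 \<le> (\<Prod>m\<leftarrow>ms. \<xi> m)"
  by (intro prod_list_nonneg) (auto simp: nonneg)

lemma abs_eval_poly_at_zero_le_weight: "well_indexed p \<Longrightarrow> \<bar>eval_poly p (\<lambda>_. 0)\<bar> \<le> weight p"
proof (induction p)
  case (Cons t p)
  obtain c ms where t: "t = (c, ms)"
    by force
  have ms: "set ms \<subseteq> {..<n}" and "well_indexed p"
    using Cons.prems by (auto simp: well_indexed_def t)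
  have "\<bar>eval_poly (t # p) (\<lambda>_. 0)\<bar> \<le> \<bar>c\<bar> * \<bar>phi_monomial ms (\<lambda>_. 0)\<bar> + weight p"
    unfolding t eval_poly_simps abs_mult[symmetric]
    using Cons.IH[OF \<open>well_indexed p\<close>] abs_triangle_ineq[of "c * phi_monomial ms (\<lambda>_. 0)" "eval_poly p (\<lambda>_. 0)"]
    by linarith
  then show ?case
    using phi_monomial_at_zero[OF ms] prod_weights_nonneg[OF ms] by (simp add: t)
qed simp

lemma sum_weight_partial_monomial:
  assumes "set ms \<subseteq> {..<n}"
  shows "(\<Sum>i<n. weight (partial_monomial i (c, ms))) = 2 * length ms * (\<bar>c\<bar> * (\<Prod>m\<leftarrow>ms. \<xi> m))"
proof -
  define w where "w = \<bar>c\<bar> * (\<Prod>m\<leftarrow>ms. \<xi> m)"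
  have "(\<Sum>i<n. weight (partial_monomial i (c, ms)))
      = (\<Sum>i<n. w * count_list ms i + w * length ms * \<xi> i)"
    using nonneg by (intro sum.cong) (auto simp: partial_monomial_def abs_mult w_def algebra_simps)
  also have "\<dots> = w * (\<Sum>i<n. count_list ms i) + w * length ms * (\<Sum>i<n. \<xi> i)"
    by (simp add: sum.distrib sum_distrib_left)
  also have "\<dots> = 2 * length ms * w"
    using sum_count_set[OF assms] sum_eq_1 by simp
  finally show ?thesis
    by (simp add: w_def)
qed

lemma sum_weight_partial_poly:
  "well_indexed p \<Longrightarrow> degree_le d p \<Longrightarrow> (\<Sum>i<n. weight (partial_poly i p)) \<le> 2 * d * weight p"
proof (induction p)
  case (Cons t p)
  obtain c ms where t: "t = (c, ms)"
    by force
  have ms: "set ms \<subseteq> {..<n}" "length ms \<le> d" and "well_indexed p" "degree_le d p"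
    using Cons.prems by (auto simp: well_indexed_def degree_le_def t)
  have "(\<Sum>i<n. weight (partial_poly i (t # p)))
      = 2 * length ms * (\<bar>c\<bar> * (\<Prod>m\<leftarrow>ms. \<xi> m)) + (\<Sum>i<n. weight (partial_poly i p))"
    using sum_weight_partial_monomial[OF ms(1)] by (simp add: t sum.distrib)
  also have "\<dots> \<le> 2 * d * (\<bar>c\<bar> * (\<Prod>m\<leftarrow>ms. \<xi> m)) + 2 * d * weight p"
    using ms prod_weights_nonneg[OF ms(1)] Cons.IH \<open>well_indexed p\<close> \<open>degree_le d p\<close>
    by (intro add_mono mult_right_mono) auto
  finally show ?case
    by (simp add: t algebra_simps)
qed simp

lemma sum_weight_partials:
  assumes "well_indexed p" "degree_le d p"
  shows "(\<Sum>s\<in>index_lists n k. weight (foldr partial_poly s p)) \<le> 2 ^ k * pochhammer (real d) k * weight p"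
proof (induction k)
  case 0
  have "index_lists n 0 = {[]}"
    by (auto simp: index_lists_def)
  then show ?case
    by simp
next
  case (Suc k)
  have "(\<Sum>s\<in>index_lists n (Suc k). weight (foldr partial_poly s p))
      = (\<Sum>s\<in>index_lists n k. \<Sum>i<n. weight (partial_poly i (foldr partial_poly s p)))"
    unfolding index_lists_Suc
    by (subst sum.reindex) (auto simp: inj_on_def sum.cartesian_product case_prod_unfold)
  also have "\<dots> \<le> (\<Sum>s\<in>index_lists n k. 2 * real (d + k) * weight (foldr partial_poly s p))"
    using well_indexed_partials[OF assms(1)] degree_le_partials[OF assms(2)]
    by (intro sum_mono sum_weight_partial_poly) (auto simp: index_lists_def)
  also have "\<dots> = 2 * real (d + k) * (\<Sum>s\<in>index_lists n k. weight (foldr partial_poly s p))"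
    by (simp add: sum_distrib_left)
  also have "\<dots> \<le> 2 * real (d + k) * (2 ^ k * pochhammer (real d) k * weight p)"
    by (intro mult_left_mono Suc.IH) auto
  finally show ?case
    by (simp add: pochhammer_rec' algebra_simps)
qed

lemma fact_mult_sum_abs_taylor_coeff:
  "fact k * (\<Sum>\<gamma>\<in>multi_indices n k. \<bar>taylor_coeff n (eval_poly p) \<gamma>\<bar>)
     = (\<Sum>s\<in>index_lists n k. \<bar>iter_partials s (eval_poly p) (\<lambda>_. 0)\<bar>)"
proof -
  define g where "g s = \<bar>iter_partials s (eval_poly p) (\<lambda>_. 0)\<bar>" for s
  have "\<bar>taylor_coeff n (eval_poly p) \<gamma>\<bar> = g (list_of_multi_index n \<gamma>) / (\<Prod>i<n. fact (\<gamma> i))" for \<gamma>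
    by (simp add: taylor_coeff_def multi_deriv_def g_def abs_prod flip: list_of_multi_index_def)
  moreover have "(\<Sum>s\<in>index_lists n k. g s)
      = (\<Sum>\<gamma>\<in>multi_indices n k. fact k / (\<Prod>i<n. fact (\<gamma> i)) * g (list_of_multi_index n \<gamma>))"
    by (rule sum_index_lists_multinomial)
      (simp add: g_def index_lists_def iter_partials_eval_poly_sort)
  ultimately show ?thesis
    by (simp add: g_def sum_distrib_left)
qed

lemma sum_abs_taylor_coeff_phi_le:
  assumes "j < n"
  shows "(\<Sum>\<gamma>\<in>multi_indices n k. \<bar>taylor_coeff n (phi n \<xi> j) \<gamma>\<bar>) \<le> 2 ^ k * \<xi> j"
proof -
  define p :: phi_poly where "p = [(1, [j])]"
  have phi_eq: "phi n \<xi> j = eval_poly p"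
    by (simp add: p_def fun_eq_iff)
  have p: "well_indexed p" "degree_le 1 p"
    using assms by (auto simp: p_def well_indexed_def degree_le_def)
  have "fact k * (\<Sum>\<gamma>\<in>multi_indices n k. \<bar>taylor_coeff n (phi n \<xi> j) \<gamma>\<bar>)
      = (\<Sum>s\<in>index_lists n k. \<bar>eval_poly (foldr partial_poly s p) (\<lambda>_. 0)\<bar>)"
    unfolding phi_eq fact_mult_sum_abs_taylor_coeff
    by (intro sum.cong refl) (simp add: index_lists_def iter_partials_eval_poly)
  also have "\<dots> \<le> (\<Sum>s\<in>index_lists n k. weight (foldr partial_poly s p))"
    using well_indexed_partials[OF p(1)]
    by (intro sum_mono abs_eval_poly_at_zero_le_weight) (auto simp: index_lists_def)
  also have "\<dots> \<le> 2 ^ k * pochhammer 1 k * weight p"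
    using sum_weight_partials[OF p] by simp
  also have "\<dots> = fact k * (2 ^ k * \<xi> j)"
    by (simp add: p_def pochhammer_fact)
  finally show ?thesis
    by simp
qed

end

lemma two_power_le_exp: "(2::real) ^ k \<le> exp (real k + 1)"
proof -
  have "(2::real) ^ k \<le> exp 1 ^ k"
    using exp_ge_add_one_self[of 1] by (intro power_mono) auto
  also have "\<dots> = exp (real k)"
    by (simp flip: exp_of_nat_mult)
  also have "\<dots> \<le> exp (real k + 1)"
    by simp
  finally show ?thesis .
qed

theorem lemmaB5:
  fixes n :: nat and \<xi> :: "nat \<Rightarrow> real" and j k :: nat
  assumes "\<forall>i<n. \<xi> i \<ge> 0"
    and "(\<Sum>i<n. \<xi> i) = 1"
    and "j < n"
    and "k \<ge> 1"
  shows "(\<Sum>\<gamma>\<in>multi_indices n k. \<bar>taylor_coeff n (phi n \<xi> j) \<gamma>\<bar>) \<le> \<xi> j * exp (real k + 1)"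
proof -
  interpret prob_vector n \<xi>
    using assms(1,2) by unfold_locales auto
  have "(\<Sum>\<gamma>\<in>multi_indices n k. \<bar>taylor_coeff n (phi n \<xi> j) \<gamma>\<bar>) \<le> 2 ^ k * \<xi> j"
    using assms(3) by (rule sum_abs_taylor_coeff_phi_le)
  also have "\<dots> \<le> exp (real k + 1) * \<xi> j"
    using two_power_le_exp assms(1,3) by (intro mult_right_mono) auto
  finally show ?thesis
    by (simp add: mult.commute)
qed

end
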